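(* Let $\mathcal{M}$ be a nontrivial graph matroid family with dimensionality $d$ and threshold $t$. Let $G=G_1\cup G_2$, where $G_1$ and $G_2$ are graphs with at least $t$ vertices in common. If $G_1$ and $G_2$ are both $\mathcal{M}$-rigid, then so is $G$.
   Context: All graphs are finite and simple and have no isolated vertices. A graph matroid family $\mathcal{M}$ assigns to every graph $G$ a matroid $\mathcal{M}(G)$ on $E(G)$ such that (i) every graph isomorphism $V(G)\to V(H)$ induces an isomorphism $\mathcal{M}(G)\to\mathcal{M}(H)$, and (ii) for every subgraph $H$ of $G$, $\mathcal{M}(H)$ is the restriction of $\mathcal{M}(G)$ to $E(H)$. $r(G)$ is the rank of $\mathcal{M}(G)$; $G$ is $\mathcal{M}$-rigid if $r(G)=r(K_{V(G)})$. $\mathcal{M}$ is nontrivial if some graph $G$ has $r(G)<|E(G)|$. An $\mathcal{M}$-circuit is a graph $C$ with $r(C)<|E(C)|$ and $r(C-e)=|E(C)|-1$ for all edges $e$. Dimensionality $d$: minimum over $\mathcal{M}$-circuits of (minimum degree $-1$); threshold $t$: minimum of $|V(C)|-1$ over $\mathcal{M}$-circuits $C$ of minimum degree $d+1$. $G_1\cup G_2$ is the graph with vertex set $V(G_1)\cup V(G_2)$ and edge set $E(G_1)\cup E(G_2)$. *)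

theory Defs
  imports Main
begin

text \<open>Since graphs have no isolated vertices, the
vertex set is the union of the edges, and subgraphs are exactly edge subsets.\<close>

type_synonym 'v graph = "'v set set"

definition graph :: "'v graph \<Rightarrow> bool" where
  "graph G \<longleftrightarrow> finite G \<and> (\<forall>e\<in>G. card e = 2)"

definition verts :: "'v graph \<Rightarrow> 'v set" where
  "verts G = \<Union>G"

definition complete_graph :: "'v set \<Rightarrow> 'v graph" where
  "complete_graph V = {e. \<exists>u v. u \<in> V \<and> v \<in> V \<and> u \<noteq> v \<and> e = {u, v}}"

definition degree :: "'v graph \<Rightarrow> 'v \<Rightarrow> nat" where
  "degree G v = card {e \<in> G. v \<in> e}"

definition min_degree :: "'v graph \<Rightarrow> nat" where
  "min_degree G = Min (degree G ` verts G)"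

definition matroid :: "'e set \<Rightarrow> ('e set \<Rightarrow> bool) \<Rightarrow> bool" where
  "matroid E indep \<longleftrightarrow> finite E \<and> indep {} \<and>
     (\<forall>X. indep X \<longrightarrow> X \<subseteq> E) \<and>
     (\<forall>X Y. indep Y \<and> X \<subseteq> Y \<longrightarrow> indep X) \<and>
     (\<forall>X Y. indep X \<and> indep Y \<and> card X < card Y \<longrightarrow> (\<exists>e\<in>Y - X. indep (insert e X)))"

definition graph_matroid_family :: "('v graph \<Rightarrow> 'v set set \<Rightarrow> bool) \<Rightarrow> bool" where
  "graph_matroid_family M \<longleftrightarrow>
     (\<forall>G. graph G \<longrightarrow> matroid G (M G)) \<and>
     (\<forall>G H f. graph G \<and> graph H \<and> bij_betw f (verts G) (verts H) \<and>
        (\<forall>u\<in>verts G. \<forall>v\<in>verts G. {u, v} \<in> G \<longleftrightarrow> {f u, f v} \<in> H) \<longrightarrow>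
        (\<forall>X. X \<subseteq> G \<longrightarrow> (M G X \<longleftrightarrow> M H ((\<lambda>e. f ` e) ` X)))) \<and>
     (\<forall>G H. graph G \<and> graph H \<and> H \<subseteq> G \<longrightarrow> (\<forall>X. M H X \<longleftrightarrow> X \<subseteq> H \<and> M G X))"

definition rank :: "('v graph \<Rightarrow> 'v set set \<Rightarrow> bool) \<Rightarrow> 'v graph \<Rightarrow> nat" where
  "rank M G = Max {card X | X. X \<subseteq> G \<and> M G X}"

definition rigid :: "('v graph \<Rightarrow> 'v set set \<Rightarrow> bool) \<Rightarrow> 'v graph \<Rightarrow> bool" where
  "rigid M G \<longleftrightarrow> rank M G = rank M (complete_graph (verts G))"

definition nontrivial :: "('v graph \<Rightarrow> 'v set set \<Rightarrow> bool) \<Rightarrow> bool" where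
  "nontrivial M \<longleftrightarrow> (\<exists>G. graph G \<and> rank M G < card G)"

definition circuit :: "('v graph \<Rightarrow> 'v set set \<Rightarrow> bool) \<Rightarrow> 'v graph \<Rightarrow> bool" where
  "circuit M C \<longleftrightarrow> graph C \<and> rank M C < card C \<and>
     (\<forall>e\<in>C. rank M (C - {e}) = card C - 1)"

definition dimensionality :: "('v graph \<Rightarrow> 'v set set \<Rightarrow> bool) \<Rightarrow> nat" where
  "dimensionality M = Inf {min_degree C - 1 | C. circuit M C}"

definition threshold :: "('v graph \<Rightarrow> 'v set set \<Rightarrow> bool) \<Rightarrow> nat" where
  "threshold M = Inf {card (verts C) - 1 | C. circuit M C \<and> min_degree C = dimensionality M + 1}"

end

(* Work in the matroid of the complete graph K on V1 \<union> V2, where Vi is the vertex set of Gi.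
   A graph H is rigid exactly when H spans every edge of the complete graph K(V(H)), so
   K(V1) \<union> K(V2) lies in the closure of G1 \<union> G2, and it remains to show that K(V1) \<union> K(V2)
   spans every edge uw with u \<in> V1 - V2 and w \<in> V2 - V1. For this take a circuit C on t + 1
   vertices and an edge xy of C, and copy C into K by sending x to u, y to w and the other
   t - 1 vertices into V1 \<inter> V2. The copy is again a circuit, and every edge of it other than uw
   lies in K(V1) or K(V2), so uw is spanned by K(V1) \<union> K(V2). *)

theory Submission
  imports Defs
begin

definition mrank :: "('e set \<Rightarrow> bool) \<Rightarrow> 'e set \<Rightarrow> nat" where
  "mrank I S = Max {card X | X. X \<subseteq> S \<and> I X}"

text \<open>The closure operator of the matroid; elements outside the ground set count as spanned.\<close>
definition spanned :: "('e set \<Rightarrow> bool) \<Rightarrow> 'e set \<Rightarrow> 'e set" where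
  "spanned I S = {f. mrank I (insert f S) = mrank I S}"

lemma subset_spanned: "S \<subseteq> spanned I S"
  unfolding spanned_def by (auto simp: insert_absorb)

context
  fixes E :: "'e set" and I :: "'e set \<Rightarrow> bool"
  assumes matroid: "matroid E I"
begin

lemma indep_empty: "I {}"
  and indep_subset: "I Y \<Longrightarrow> X \<subseteq> Y \<Longrightarrow> I X"
  and indep_augment: "I X \<Longrightarrow> I Y \<Longrightarrow> card X < card Y \<Longrightarrow> \<exists>e\<in>Y - X. I (insert e X)"
  using matroid unfolding matroid_def by blast+

lemma card_indep_le: "I X \<Longrightarrow> card X \<le> card E"
  and finite_indep: "I X \<Longrightarrow> finite X"
  using matroid unfolding matroid_def by (auto intro: card_mono finite_subset)

lemma finite_indep_cards: "finite {card X | X. X \<subseteq> S \<and> I X}"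
  by (rule finite_subset[of _ "{..card E}"]) (auto dest: card_indep_le)

lemma card_le_mrank: "I X \<Longrightarrow> X \<subseteq> S \<Longrightarrow> card X \<le> mrank I S"
  unfolding mrank_def using finite_indep_cards by (intro Max_ge) auto

lemma obtain_basis:
  obtains X where "X \<subseteq> S" "I X" "card X = mrank I S"
proof -
  have "mrank I S \<in> {card X | X. X \<subseteq> S \<and> I X}"
    unfolding mrank_def using finite_indep_cards indep_empty by (intro Max_in) auto
  then show ?thesis using that by auto
qed

lemma mrank_mono: "S \<subseteq> T \<Longrightarrow> mrank I S \<le> mrank I T"
  by (metis obtain_basis card_le_mrank order_trans)

lemma mrank_le_card: "finite S \<Longrightarrow> mrank I S \<le> card S"
  by (metis obtain_basis card_mono)

lemma indep_iff_mrank_eq_card: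
  assumes "finite S"
  shows "I S \<longleftrightarrow> mrank I S = card S"
proof
  assume "I S"
  with assms show "mrank I S = card S"
    using card_le_mrank[of S S] mrank_le_card[of S] by simp
next
  assume "mrank I S = card S"
  obtain X where "X \<subseteq> S" "I X" "card X = mrank I S" by (rule obtain_basis)
  with \<open>mrank I S = card S\<close> assms show "I S"
    by (metis card_subset_eq)
qed

lemma obtain_augmenting_element:
  assumes "I X" "card X < mrank I T"
  obtains g where "g \<in> T" "g \<notin> X" "I (insert g X)"
proof -
  obtain Y where "Y \<subseteq> T" "I Y" "card Y = mrank I T" by (rule obtain_basis)
  with assms indep_augment[of X Y] that show ?thesis by auto
qed

lemma extend_to_basis:
  assumes "I Z" "Z \<subseteq> S"
  obtains X where "Z \<subseteq> X" "X \<subseteq> S" "I X" "card X = mrank I S"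
proof -
  let ?P = "\<lambda>X. Z \<subseteq> X \<and> X \<subseteq> S \<and> I X"
  obtain X where X: "?P X" and maximal: "\<And>Y. ?P Y \<Longrightarrow> card Y \<le> card X"
    using ex_has_greatest_nat[of ?P Z card "Suc (card E)"] assms
    by (auto simp: less_Suc_eq_le dest: card_indep_le)
  have "card X = mrank I S"
  proof (rule ccontr)
    assume "card X \<noteq> mrank I S"
    with X have "card X < mrank I S" using card_le_mrank by (simp add: order_less_le)
    with X obtain e where e: "e \<in> S" "e \<notin> X" "I (insert e X)"
      by (auto elim: obtain_augmenting_element)
    with X have "card (insert e X) \<le> card X" by (intro maximal) auto
    with e X show False by (simp add: finite_indep)
  qed
  with X that show ?thesis by blast
qed

lemma dependent_insert_spanned:
  assumes Z: "I Z" "Z \<subseteq> S" and dependent: "\<not> I (insert f Z)"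
  shows "f \<in> spanned I S"
proof -
  obtain X where X: "Z \<subseteq> X" "X \<subseteq> S" "I X" "card X = mrank I S"
    using extend_to_basis[OF Z] .
  have "mrank I (insert f S) \<le> card X"
  proof (rule ccontr)
    assume "\<not> mrank I (insert f S) \<le> card X"
    then have "card X < mrank I (insert f S)" by simp
    with X(3) obtain g where g: "g \<in> insert f S" "g \<notin> X" "I (insert g X)"
      by (rule obtain_augmenting_element)
    show False
    proof (cases "g = f")
      case True
      with X have "insert f Z \<subseteq> insert g X" by auto
      with g dependent indep_subset show False by blast
    next
      case False
      with g X have "card (insert g X) \<le> mrank I S" by (intro card_le_mrank) auto
      with g X show False by (simp add: finite_indep)
    qed
  qed
  with X mrank_mono[OF subset_insertI, of S f] show ?thesis
    unfolding spanned_def mem_Collect_eq by linarith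
qed

lemma spanned_mono:
  assumes "S \<subseteq> T"
  shows "spanned I S \<subseteq> spanned I T"
proof
  fix f assume f: "f \<in> spanned I S"
  show "f \<in> spanned I T"
  proof (cases "f \<in> S")
    case True
    with assms subset_spanned[of T I] show ?thesis by (simp add: subset_iff)
  next
    case False
    obtain X where X: "X \<subseteq> S" "I X" "card X = mrank I S" by (rule obtain_basis)
    have "\<not> I (insert f X)"
    proof
      assume "I (insert f X)"
      then have "card (insert f X) \<le> mrank I (insert f S)"
        using X(1) by (intro card_le_mrank) auto
      moreover have "card (insert f X) = Suc (mrank I S)"
        using X False finite_indep by (metis card_insert_disjoint subsetD)
      ultimately show False using f unfolding spanned_def by simp
    qed
    with X assms show ?thesis by (intro dependent_insert_spanned) auto
  qed
qed

lemma mrank_Un_spanned: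
  assumes "B \<subseteq> spanned I T"
  shows "mrank I (T \<union> B) = mrank I T"
proof -
  obtain X where X: "X \<subseteq> T" "I X" "card X = mrank I T" by (rule obtain_basis)
  have "mrank I (T \<union> B) \<le> card X"
  proof (rule ccontr)
    assume "\<not> mrank I (T \<union> B) \<le> card X"
    then have "card X < mrank I (T \<union> B)" by simp
    with X(2) obtain g where g: "g \<in> T \<union> B" "g \<notin> X" "I (insert g X)"
      by (rule obtain_augmenting_element)
    with X have "card (insert g X) \<le> mrank I (insert g T)"
      by (intro card_le_mrank) auto
    moreover have "mrank I (insert g T) = mrank I T"
      using g assms by (cases "g \<in> T") (auto simp: insert_absorb spanned_def)
    ultimately show False using g X by (simp add: finite_indep)
  qed
  with X mrank_mono[of T "T \<union> B"] show ?thesis by auto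
qed

lemma mrank_eq_iff_subset_spanned:
  assumes "S \<subseteq> T"
  shows "mrank I T = mrank I S \<longleftrightarrow> T \<subseteq> spanned I S"
proof
  assume eq: "mrank I T = mrank I S"
  show "T \<subseteq> spanned I S"
  proof
    fix f assume "f \<in> T"
    with assms have "mrank I (insert f S) \<le> mrank I T" by (intro mrank_mono) auto
    with eq mrank_mono[OF subset_insertI, of S f] show "f \<in> spanned I S"
      unfolding spanned_def mem_Collect_eq by linarith
  qed
next
  assume "T \<subseteq> spanned I S"
  with mrank_Un_spanned assms show "mrank I T = mrank I S"
    by (metis Un_absorb1)
qed

lemma spanned_Un_spanned:
  assumes "T \<subseteq> spanned I S"
  shows "spanned I (S \<union> T) = spanned I S"
proof
  show "spanned I (S \<union> T) \<subseteq> spanned I S"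
  proof
    fix f assume "f \<in> spanned I (S \<union> T)"
    then have "mrank I (insert f (S \<union> T)) = mrank I S"
      using mrank_Un_spanned[OF assms] unfolding spanned_def by simp
    moreover have "mrank I (insert f S) \<le> mrank I (insert f (S \<union> T))"
      by (rule mrank_mono) auto
    ultimately show "f \<in> spanned I S"
      using mrank_mono[OF subset_insertI, of S f] unfolding spanned_def mem_Collect_eq by linarith
  qed
  show "spanned I S \<subseteq> spanned I (S \<union> T)" by (rule spanned_mono) simp
qed

end

lemma graph_subset: "graph G \<Longrightarrow> H \<subseteq> G \<Longrightarrow> graph H"
  unfolding graph_def using finite_subset by blast

lemma graph_Un: "graph G \<Longrightarrow> graph H \<Longrightarrow> graph (G \<union> H)"
  unfolding graph_def by auto

lemma verts_Un: "verts (G \<union> H) = verts G \<union> verts H"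
  unfolding verts_def by simp

lemma finite_verts: "graph G \<Longrightarrow> finite (verts G)"
  unfolding graph_def verts_def by (intro finite_Union) (auto intro: card_ge_0_finite)

lemma complete_graph_eq: "complete_graph V = {e. e \<subseteq> V \<and> card e = 2}"
  unfolding complete_graph_def card_2_iff by blast

lemma graph_complete_graph: "finite V \<Longrightarrow> graph (complete_graph V)"
  unfolding graph_def complete_graph_eq
  by (auto intro: finite_subset[of _ "Pow V"])

lemma complete_graph_mono: "V \<subseteq> W \<Longrightarrow> complete_graph V \<subseteq> complete_graph W"
  unfolding complete_graph_eq by blast

lemma graph_subset_complete_graph: "graph G \<Longrightarrow> verts G \<subseteq> V \<Longrightarrow> G \<subseteq> complete_graph V"
  unfolding graph_def verts_def complete_graph_eq by blast

definition map_graph :: "('v \<Rightarrow> 'w) \<Rightarrow> 'v graph \<Rightarrow> 'w graph" where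
  "map_graph f G = image f ` G"

lemma verts_map_graph: "verts (map_graph f G) = f ` verts G"
  unfolding verts_def map_graph_def by blast

lemma inj_on_edges: "inj_on f (verts G) \<Longrightarrow> inj_on (image f) G"
  by (rule inj_on_subset[OF inj_on_image_Pow]) (auto simp: verts_def)

lemma graph_map_graph:
  assumes "graph G" "inj_on f (verts G)"
  shows "graph (map_graph f G)"
  unfolding graph_def map_graph_def
proof
  show "finite (image f ` G)" using assms(1) unfolding graph_def by simp
  have "card (f ` e) = 2" if "e \<in> G" for e
    using that assms card_image inj_on_subset unfolding graph_def verts_def
    by (metis Union_upper)
  then show "\<forall>e\<in>image f ` G. card e = 2" by blast
qed

lemma graph_matroid_family_matroid:
  assumes "graph_matroid_family M" "graph G"
  shows "matroid G (M G)"
  using assms unfolding graph_matroid_family_def by simp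

lemma graph_matroid_family_restrict:
  assumes "graph_matroid_family M" "graph G" "H \<subseteq> G"
  shows "M H X \<longleftrightarrow> X \<subseteq> H \<and> M G X"
  using assms graph_subset[OF assms(2,3)] unfolding graph_matroid_family_def by simp

lemma rank_eq_mrank_restrict:
  assumes "graph_matroid_family M" "graph G" "H \<subseteq> G"
  shows "rank M H = mrank (M G) H"
  unfolding rank_def mrank_def using graph_matroid_family_restrict[OF assms] by metis

lemma graph_matroid_family_iso:
  assumes "graph_matroid_family M" "graph G" "graph H" "bij_betw f (verts G) (verts H)"
    and "\<forall>u\<in>verts G. \<forall>v\<in>verts G. {u, v} \<in> G \<longleftrightarrow> {f u, f v} \<in> H" "X \<subseteq> G"
  shows "M G X \<longleftrightarrow> M H (image f ` X)"
  using assms unfolding graph_matroid_family_def by simp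

lemma graph_matroid_family_map_graph:
  assumes gm: "graph_matroid_family M" and G: "graph G" and inj: "inj_on f (verts G)"
    and "X \<subseteq> G"
  shows "M G X \<longleftrightarrow> M (map_graph f G) (map_graph f X)"
proof -
  have "{u, v} \<in> G \<longleftrightarrow> {f u, f v} \<in> map_graph f G" if "u \<in> verts G" "v \<in> verts G" for u v
    using inj_on_image_mem_iff[OF inj_on_image_Pow[OF inj], of "{u, v}" G] that
    unfolding map_graph_def verts_def by auto
  moreover have "bij_betw f (verts G) (verts (map_graph f G))"
    using inj by (simp add: bij_betw_def verts_map_graph)
  ultimately show ?thesis
    using graph_matroid_family_iso[OF gm G graph_map_graph[OF G inj]] \<open>X \<subseteq> G\<close>
    unfolding map_graph_def by blast
qed

lemma circuit_iff_minimal_dependent: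
  assumes gm: "graph_matroid_family M"
  shows "circuit M C \<longleftrightarrow> graph C \<and> \<not> M C C \<and> (\<forall>e\<in>C. M C (C - {e}))"
proof (cases "graph C")
  case True
  note matroid = graph_matroid_family_matroid[OF gm True]
  have finite: "finite C" using True unfolding graph_def by simp
  have rank: "rank M H = mrank (M C) H" if "H \<subseteq> C" for H
    using rank_eq_mrank_restrict[OF gm True that] .
  have "rank M C \<le> card C" using mrank_le_card[OF matroid finite] by (simp add: rank)
  then have "rank M C < card C \<longleftrightarrow> \<not> M C C"
    using indep_iff_mrank_eq_card[OF matroid finite] by (simp add: rank order_less_le)
  moreover have "rank M (C - {e}) = card C - 1 \<longleftrightarrow> M C (C - {e})" if "e \<in> C" for e
    using indep_iff_mrank_eq_card[OF matroid, of "C - {e}"] that finite by (simp add: rank)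
  ultimately show ?thesis using True unfolding circuit_def by simp
next
  case False
  then show ?thesis unfolding circuit_def by simp
qed

lemma circuit_nonempty: "circuit M C \<Longrightarrow> C \<noteq> {}"
  unfolding circuit_def by auto

lemma ex_circuit:
  assumes gm: "graph_matroid_family M" and "nontrivial M"
  obtains C where "circuit M C"
proof -
  obtain G where G: "graph G" "rank M G < card G"
    using \<open>nontrivial M\<close> unfolding nontrivial_def by blast
  note matroid = graph_matroid_family_matroid[OF gm G(1)]
  have "\<not> M G G"
    using G indep_iff_mrank_eq_card[OF matroid] rank_eq_mrank_restrict[OF gm G(1) order_refl]
    unfolding graph_def by simp
  then obtain C where C: "C \<subseteq> G" "\<not> M G C"
    and minimal: "\<And>D. D \<subseteq> G \<Longrightarrow> \<not> M G D \<Longrightarrow> card C \<le> card D"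
    using ex_has_least_nat[of "\<lambda>C. C \<subseteq> G \<and> \<not> M G C" G card] by blast
  have graph: "graph C" using graph_subset[OF G(1) C(1)] .
  have "finite C" using graph unfolding graph_def by simp
  have "M G (C - {e})" if "e \<in> C" for e
  proof (rule ccontr)
    assume "\<not> M G (C - {e})"
    with C(1) have "card C \<le> card (C - {e})" by (intro minimal) auto
    with card_Diff1_less[OF \<open>finite C\<close> that] show False by simp
  qed
  with C have "\<not> M C C \<and> (\<forall>e\<in>C. M C (C - {e}))"
    by (auto simp: graph_matroid_family_restrict[OF gm G(1) C(1)])
  with graph have "circuit M C" by (simp add: circuit_iff_minimal_dependent[OF gm])
  then show ?thesis by (rule that)
qed

lemma one_le_min_degree:
  assumes "graph G" "G \<noteq> {}"
  shows "1 \<le> min_degree G"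
proof -
  have finite: "finite G" and two: "\<And>e. e \<in> G \<Longrightarrow> card e = 2"
    using assms(1) unfolding graph_def by auto
  obtain e where "e \<in> G" using assms(2) by blast
  moreover from two[OF this] have "e \<noteq> {}" by auto
  ultimately have "verts G \<noteq> {}" unfolding verts_def by blast
  moreover have "1 \<le> degree G v" if "v \<in> verts G" for v
  proof -
    from that obtain e where "e \<in> G" "v \<in> e" unfolding verts_def by blast
    then have "{e \<in> G. v \<in> e} \<noteq> {}" by blast
    with finite show ?thesis unfolding degree_def by (simp add: Suc_le_eq card_gt_0_iff)
  qed
  ultimately show ?thesis
    unfolding min_degree_def using finite_verts[OF assms(1)] by (simp add: Min_ge_iff)
qed

lemma threshold_attained:
  assumes gm: "graph_matroid_family M" and "nontrivial M"
  obtains C where "circuit M C" "card (verts C) - 1 = threshold M"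
proof -
  obtain C0 where "circuit M C0" using ex_circuit[OF assms] .
  then have "dimensionality M \<in> {min_degree C - 1 | C. circuit M C}"
    unfolding dimensionality_def by (intro Inf_nat_def1) blast
  then obtain C1 where C1: "circuit M C1" "min_degree C1 - 1 = dimensionality M" by auto
  with one_le_min_degree[of C1] circuit_nonempty[OF C1(1)]
  have "min_degree C1 = dimensionality M + 1" unfolding circuit_def by simp
  with C1(1) have "threshold M \<in>
      {card (verts C) - 1 | C. circuit M C \<and> min_degree C = dimensionality M + 1}"
    unfolding threshold_def by (intro Inf_nat_def1) blast
  with that show ?thesis by auto
qed

lemma obtain_inj_on_mapping_pair:
  assumes "finite A" "x \<in> A" "y \<in> A" "x \<noteq> y"
    and "finite W" "card A \<le> card W + 2" "u \<notin> W" "w \<notin> W" "u \<noteq> w"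
  obtains f where "inj_on f A" "f x = u" "f y = w" "f ` A \<subseteq> insert u (insert w W)"
proof -
  define R where "R = A - {x, y}"
  have A: "A = insert x (insert y R)" and xy: "x \<notin> R" "y \<notin> R"
    using assms(2,3) unfolding R_def by auto
  have "card R \<le> card W" using assms(1-4,6) unfolding R_def by (simp add: card_Diff_subset)
  then obtain g where g: "g ` R \<subseteq> W" "inj_on g R"
    using card_le_inj[of R W] assms(1,5) unfolding R_def by auto
  define f where "f = g(x := u, y := w)"
  have f_R: "f z = g z" if "z \<in> R" for z using that xy unfolding f_def by auto
  have f_xy: "f x = u" "f y = w" using assms(4) unfolding f_def by auto
  have image_R: "f ` R \<subseteq> W" using g(1) f_R by auto
  have "inj_on f R" using inj_on_cong[of R f g] f_R g(2) by blast
  with image_R xy f_xy assms(7-9) have "inj_on f (insert x (insert y R))"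
    by (simp add: inj_on_insert) blast
  moreover have "f ` insert x (insert y R) \<subseteq> insert u (insert w W)"
    using image_R f_xy by auto
  ultimately show ?thesis using that f_xy unfolding A by blast
qed

lemma edge_in_complete_graph_Un:
  assumes "d \<subseteq> insert u (insert w W)" "card d = 2" "d \<noteq> {u, w}" "u \<noteq> w"
    and "W \<subseteq> V1 \<inter> V2" "u \<in> V1" "w \<in> V2"
  shows "d \<in> complete_graph V1 \<union> complete_graph V2"
proof -
  have "\<not> (u \<in> d \<and> w \<in> d)"
  proof
    assume "u \<in> d \<and> w \<in> d"
    then have "{u, w} \<subseteq> d" by blast
    with assms(2,4) have "{u, w} = d" by (intro card_subset_eq) (auto intro: card_ge_0_finite)
    with assms(3) show False by simp
  qed
  with assms(1,5-7) have "d \<subseteq> V1 \<or> d \<subseteq> V2" by blast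
  with assms(2) show ?thesis unfolding complete_graph_eq by blast
qed

lemma map_graph_circuit:
  assumes gm: "graph_matroid_family M" and C: "circuit M C" and inj: "inj_on f (verts C)"
    and K: "graph K" "map_graph f C \<subseteq> K" and e: "e \<in> C"
  shows "\<not> M K (map_graph f C)" "M K (map_graph f C - {f ` e})"
proof -
  have gC: "graph C" and dependent: "\<not> M C C" and minimal: "M C (C - {e})"
    using C e by (auto simp: circuit_iff_minimal_dependent[OF gm])
  have "map_graph f (C - {e}) = map_graph f C - {f ` e}"
    using inj_on_image_set_diff[OF inj_on_edges[OF inj], of C "{e}"] e
    unfolding map_graph_def by simp
  with minimal show "M K (map_graph f C - {f ` e})"
    using graph_matroid_family_map_graph[OF gm gC inj, of "C - {e}"]
      graph_matroid_family_restrict[OF gm K] by auto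
  show "\<not> M K (map_graph f C)"
    using dependent graph_matroid_family_map_graph[OF gm gC inj, of C]
      graph_matroid_family_restrict[OF gm K] by auto
qed

lemma cross_edge_spanned:
  assumes gm: "graph_matroid_family M" and C: "circuit M C"
    and small: "card (verts C) \<le> card (V1 \<inter> V2) + 2"
    and finite: "finite V1" "finite V2"
    and u: "u \<in> V1" "u \<notin> V2" and w: "w \<in> V2" "w \<notin> V1"
  shows "{u, w} \<in> spanned (M (complete_graph (V1 \<union> V2))) (complete_graph V1 \<union> complete_graph V2)"
proof -
  let ?K = "complete_graph (V1 \<union> V2)"
  have K: "graph ?K" using finite by (simp add: graph_complete_graph)
  have gC: "graph C" using C unfolding circuit_def by simp
  obtain e where e: "e \<in> C" using circuit_nonempty[OF C] by blast
  then obtain x y where xy: "e = {x, y}" "x \<noteq> y"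
    using gC unfolding graph_def by (metis card_2_iff)
  have "x \<in> verts C" "y \<in> verts C" using e xy unfolding verts_def by auto
  then obtain f where f: "inj_on f (verts C)" "f x = u" "f y = w"
    and f_verts: "f ` verts C \<subseteq> insert u (insert w (V1 \<inter> V2))"
    using obtain_inj_on_mapping_pair[OF finite_verts[OF gC] _ _ xy(2) _ small] finite u w
    by blast
  let ?H = "map_graph f C"
  have H: "graph ?H" using graph_map_graph[OF gC f(1)] .
  have H_verts: "verts ?H \<subseteq> insert u (insert w (V1 \<inter> V2))"
    using f_verts by (simp add: verts_map_graph)
  with u w have HK: "?H \<subseteq> ?K" by (intro graph_subset_complete_graph[OF H]) auto
  have fe: "f ` e = {u, w}" using xy f by simp
  with e have "{u, w} \<in> ?H" unfolding map_graph_def by (metis imageI)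
  then have "\<not> M ?K (insert {u, w} (?H - {{u, w}}))"
    using map_graph_circuit(1)[OF gm C f(1) K HK e] by (simp add: insert_absorb)
  moreover have "?H - {{u, w}} \<subseteq> complete_graph V1 \<union> complete_graph V2"
  proof
    fix d assume d: "d \<in> ?H - {{u, w}}"
    with H H_verts have "d \<subseteq> insert u (insert w (V1 \<inter> V2))" "card d = 2"
      unfolding graph_def verts_def by auto
    with d u w show "d \<in> complete_graph V1 \<union> complete_graph V2"
      by (intro edge_in_complete_graph_Un[where W = "V1 \<inter> V2"]) auto
  qed
  ultimately show ?thesis
    using dependent_insert_spanned[OF graph_matroid_family_matroid[OF gm K]]
      map_graph_circuit(2)[OF gm C f(1) K HK e] fe by auto
qed

lemma complete_graph_Un_spanned:
  assumes gm: "graph_matroid_family M" and C: "circuit M C"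
    and small: "card (verts C) \<le> card (V1 \<inter> V2) + 2"
    and finite: "finite V1" "finite V2"
  shows "complete_graph (V1 \<union> V2)
    \<subseteq> spanned (M (complete_graph (V1 \<union> V2))) (complete_graph V1 \<union> complete_graph V2)"
    (is "_ \<subseteq> ?span")
proof
  fix e assume "e \<in> complete_graph (V1 \<union> V2)"
  then obtain a b where ab: "e = {a, b}" "a \<noteq> b" "a \<in> V1 \<union> V2" "b \<in> V1 \<union> V2"
    unfolding complete_graph_def by blast
  show "e \<in> ?span"
  proof (cases "e \<in> complete_graph V1 \<union> complete_graph V2")
    case True
    then show ?thesis by (rule subsetD[OF subset_spanned])
  next
    case False
    then have "\<not> (a \<in> V1 \<and> b \<in> V1)" "\<not> (a \<in> V2 \<and> b \<in> V2)"
      using ab unfolding complete_graph_def by blast+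
    with ab(3,4) consider "a \<in> V1 - V2" "b \<in> V2 - V1" | "b \<in> V1 - V2" "a \<in> V2 - V1" by blast
    then show ?thesis
    proof cases
      case 1
      then show ?thesis using cross_edge_spanned[OF gm C small finite, of a b] ab(1) by simp
    next
      case 2
      then show ?thesis using cross_edge_spanned[OF gm C small finite, of b a] ab(1)
        by (simp add: insert_commute)
    qed
  qed
qed

lemma rigid_iff_spanned:
  assumes gm: "graph_matroid_family M" and G: "graph G"
    and "finite V" "verts G \<subseteq> V"
  shows "rigid M G \<longleftrightarrow> complete_graph (verts G) \<subseteq> spanned (M (complete_graph V)) G"
proof -
  let ?K = "complete_graph V"
  have K: "graph ?K" using \<open>finite V\<close> by (rule graph_complete_graph)
  have "G \<subseteq> complete_graph (verts G)" by (rule graph_subset_complete_graph[OF G order_refl])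
  moreover have KG: "complete_graph (verts G) \<subseteq> ?K" by (rule complete_graph_mono) fact
  ultimately show ?thesis
    unfolding rigid_def
    using rank_eq_mrank_restrict[OF gm K] mrank_eq_iff_subset_spanned[OF graph_matroid_family_matroid[OF gm K]]
    by (metis order_trans)
qed

theorem lemma2p3:
  fixes M :: "'v graph \<Rightarrow> 'v set set \<Rightarrow> bool" and G1 G2 :: "'v graph"
  assumes "infinite (UNIV :: 'v set)"
    and "graph_matroid_family M"
    and "nontrivial M"
    and "graph G1" and "graph G2"
    and "card (verts G1 \<inter> verts G2) \<ge> threshold M"
    and "rigid M G1" and "rigid M G2"
  shows "rigid M (G1 \<union> G2)"
proof -
  \<comment> \<open>The vertex type need not be infinite: the circuit is copied into V1 \<union> V2 itself.\<close>
  note gm = assms(2)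
  define V1 V2 where "V1 = verts G1" and "V2 = verts G2"
  let ?G = "G1 \<union> G2" and ?K1 = "complete_graph V1" and ?K2 = "complete_graph V2"
  let ?span = "spanned (M (complete_graph (V1 \<union> V2)))"
  have finite: "finite V1" "finite V2" using finite_verts assms(4,5) unfolding V1_def V2_def by auto
  have G: "graph ?G" "verts ?G = V1 \<union> V2"
    using graph_Un[OF assms(4,5)] by (auto simp: verts_Un V1_def V2_def)
  have "graph (complete_graph (V1 \<union> V2))" using finite by (simp add: graph_complete_graph)
  note matroid = graph_matroid_family_matroid[OF gm this]
  have "?K1 \<subseteq> ?span G1" "?K2 \<subseteq> ?span G2"
    using rigid_iff_spanned[OF gm assms(4)] rigid_iff_spanned[OF gm assms(5)] assms(7,8) finite
    unfolding V1_def V2_def by auto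
  then have K12: "?K1 \<union> ?K2 \<subseteq> ?span ?G"
    using spanned_mono[OF matroid, of G1 ?G] spanned_mono[OF matroid, of G2 ?G] by blast
  obtain C where "circuit M C" "card (verts C) - 1 = threshold M"
    using threshold_attained[OF gm assms(3)] .
  with assms(6) have "complete_graph (V1 \<union> V2) \<subseteq> ?span (?K1 \<union> ?K2)"
    by (intro complete_graph_Un_spanned[OF gm] finite) (auto simp: V1_def V2_def)
  also have "\<dots> \<subseteq> ?span (?G \<union> (?K1 \<union> ?K2))"
    by (intro spanned_mono[OF matroid]) auto
  also have "\<dots> = ?span ?G"
    by (intro spanned_Un_spanned[OF matroid] K12)
  finally show ?thesis using rigid_iff_spanned[OF gm G(1), of "V1 \<union> V2"] G(2) finite by simp
qed

end
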